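(* Let $n\ge 3$. The square of the cycle, $C_n^2$, is odd prime if and only if $n\not\equiv 2 \pmod 3$.
   Context: All graphs are finite and simple. A graph $G$ of order $N$ is odd prime if there is a bijection $\ell:V(G)\to\{1,3,\ldots,2N-1\}$ with $\gcd(\ell(u),\ell(v))=1$ for every edge $uv$. For a graph $G$ and $k\ge 1$, the power $G^k$ has vertex set $V(G)$, with $u\ne v$ adjacent iff their distance in $G$ is at most $k$. $C_n$ is the cycle on $n$ vertices. *)

theory Defs
  imports Main
begin

text \<open>Graphs are given by a vertex set V and a symmetric irreflexive adjacency relation E.\<close>

definition walk :: "('a \<Rightarrow> 'a \<Rightarrow> bool) \<Rightarrow> 'a list \<Rightarrow> bool" where
  "walk E xs \<longleftrightarrow> xs \<noteq> [] \<and> (\<forall>i. Suc i < length xs \<longrightarrow> E (xs ! i) (xs ! Suc i))"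

definition dist_le :: "('a \<Rightarrow> 'a \<Rightarrow> bool) \<Rightarrow> 'a \<Rightarrow> 'a \<Rightarrow> nat \<Rightarrow> bool" where
  "dist_le E u v k \<longleftrightarrow> (\<exists>xs. walk E xs \<and> hd xs = u \<and> last xs = v \<and> length xs \<le> Suc k)"

definition graph_power :: "'a set \<Rightarrow> ('a \<Rightarrow> 'a \<Rightarrow> bool) \<Rightarrow> nat \<Rightarrow> 'a \<Rightarrow> 'a \<Rightarrow> bool" where
  "graph_power V E k u v \<longleftrightarrow> u \<in> V \<and> v \<in> V \<and> u \<noteq> v \<and> dist_le E u v k"

definition cycle_verts :: "nat \<Rightarrow> nat set" where
  "cycle_verts n = {0..<n}"

definition cycle_adj :: "nat \<Rightarrow> nat \<Rightarrow> nat \<Rightarrow> bool" where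
  "cycle_adj n i j \<longleftrightarrow> i < n \<and> j < n \<and> i \<noteq> j \<and> (j = (i + 1) mod n \<or> i = (j + 1) mod n)"

definition odd_prime :: "'a set \<Rightarrow> ('a \<Rightarrow> 'a \<Rightarrow> bool) \<Rightarrow> bool" where
  "odd_prime V E \<longleftrightarrow> (\<exists>lab :: 'a \<Rightarrow> nat.
      bij_betw lab V {m. odd m \<and> m < 2 * card V} \<and>
      (\<forall>u v. E u v \<longrightarrow> coprime (lab u) (lab v)))"

end

theory Submission
  imports Defs "HOL-Number_Theory.Cong"
begin

(* Label vertex i by 2i+1. Labels of adjacent vertices are then odd numbers differing by 2 or 4,
   except across the wrap-around, where one label is 1, or the pair is (3, 2n-1); and 3 divides
   2n-1 exactly when n = 2 (mod 3).
   Conversely, in any odd prime labelling the vertices carrying the (n+1) div 3 odd multiples of 3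
   below 2n are pairwise non-adjacent. For an independent set S of C_n^2 the arcs {s, s+1, s+2},
   s in S, are pairwise disjoint, so 3 |S| <= n, which fails for n = 3q+2 and |S| = q+1. *)

lemma walk_Cons_Cons [simp]: "walk E (x # y # xs) \<longleftrightarrow> E x y \<and> walk E (y # xs)"
  by (auto simp: walk_def nth_Cons split: nat.splits)

lemma cong_add_swap_int: "[a = b + c] (mod m) \<longleftrightarrow> [b = a + - c] (mod m)" for a b c m :: int
  by (simp add: cong_iff_dvd_diff dvd_diff_commute diff_diff_eq2 add.commute)

lemma cycle_adj_cong:
  assumes "cycle_adj n i j"
  obtains e :: int where "\<bar>e\<bar> = 1" "[int j = int i + e] (mod int n)"
proof -
  have "[j = i + 1] (mod n) \<or> [i = j + 1] (mod n)"
    using assms unfolding cycle_adj_def cong_def by auto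
  then have "[int j = int i + 1] (mod int n) \<or> [int i = int j + 1] (mod int n)"
    by (metis cong_int_iff of_nat_Suc Suc_eq_plus1 add.commute)
  then have "[int j = int i + 1] (mod int n) \<or> [int j = int i + - 1] (mod int n)"
    by (metis cong_add_swap_int)
  then show thesis
    using that[of 1] that[of "- 1"] by (metis abs_one abs_minus_cancel)
qed

lemma walk_cycle_offset:
  assumes "walk (cycle_adj n) xs"
  shows "\<exists>j::int. \<bar>j\<bar> < int (length xs) \<and> [int (last xs) = int (hd xs) + j] (mod int n)"
  using assms
proof (induction xs)
  case Nil
  then show ?case by (simp add: walk_def)
next
  case (Cons x xs)
  show ?case
  proof (cases xs)
    case Nil
    then show ?thesis by (intro exI[of _ 0]) auto
  next
    case (Cons y ys)
    with Cons.prems have "cycle_adj n x y" "walk (cycle_adj n) xs" by auto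
    obtain e :: int where "\<bar>e\<bar> = 1" "[int y = int x + e] (mod int n)"
      using cycle_adj_cong[OF \<open>cycle_adj n x y\<close>] by blast
    moreover obtain j :: int where "\<bar>j\<bar> < int (length xs)" "[int (last xs) = int y + j] (mod int n)"
      using Cons.IH[OF \<open>walk (cycle_adj n) xs\<close>] \<open>xs = y # ys\<close> by auto
    ultimately have "[int (last xs) = int x + (e + j)] (mod int n)"
      by (metis add.assoc cong_add_rcancel cong_trans)
    with \<open>\<bar>e\<bar> = 1\<close> \<open>\<bar>j\<bar> < int (length xs)\<close> show ?thesis
      using Cons by (intro exI[of _ "e + j"]) auto
  qed
qed

lemma cycle_power_adjD:
  assumes "graph_power (cycle_verts n) (cycle_adj n) k u v"
  shows "u < n \<and> v < n \<and> v \<noteq> u \<and> (\<exists>d\<in>{1..k}. v = (u + d) mod n \<or> u = (v + d) mod n)"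
proof -
  from assms have uv: "u < n" "v < n" "v \<noteq> u"
    by (auto simp: graph_power_def cycle_verts_def)
  from assms obtain xs where "walk (cycle_adj n) xs" "hd xs = u" "last xs = v" "length xs \<le> Suc k"
    by (auto simp: graph_power_def dist_le_def)
  then obtain j :: int where j: "\<bar>j\<bar> \<le> int k" "[int v = int u + j] (mod int n)"
    using walk_cycle_offset[of n xs] by force
  have mod_eq: "b = (a + d) mod n" if "b < n" "[int b = int a + int d] (mod int n)" for a b d
    using that by (metis cong_def cong_int_iff mod_less of_nat_add)
  have "j \<noteq> 0"
    using j(2) uv by (auto simp: cong_int_iff dest: cong_less_modulus_unique_nat)
  then consider "j > 0" | "j < 0" by linarith
  then have "\<exists>d\<in>{1..k}. v = (u + d) mod n \<or> u = (v + d) mod n"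
  proof cases
    case 1
    with j have "v = (u + nat j) mod n"
      by (intro mod_eq) (auto simp: uv)
    with 1 j(1) show ?thesis by (intro bexI[of _ "nat j"]) auto
  next
    case 2
    from j(2) 2 have "[int u = int v + int (nat (- j))] (mod int n)"
      by (simp add: cong_add_swap_int)
    with uv have "u = (v + nat (- j)) mod n"
      by (intro mod_eq) auto
    with 2 j(1) show ?thesis by (intro bexI[of _ "nat (- j)"]) auto
  qed
  with uv show ?thesis by blast
qed

lemma cycle_adj_Suc_mod:
  assumes "2 \<le> n"
  shows "cycle_adj n (m mod n) (Suc m mod n)"
proof -
  have "m mod n < n" using assms by simp
  moreover have "Suc m mod n \<noteq> m mod n"
    using assms \<open>m mod n < n\<close> by (simp add: mod_Suc)
  ultimately show ?thesis using assms by (simp add: cycle_adj_def mod_Suc_eq)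
qed

lemma cycle_power_adjI:
  assumes "2 \<le> n" "u < n" "d \<le> k" "v = (u + d) mod n" "v \<noteq> u"
  shows "graph_power (cycle_verts n) (cycle_adj n) k u v"
proof -
  define xs where "xs = map (\<lambda>i. (u + i) mod n) [0..<Suc d]"
  have "walk (cycle_adj n) xs"
    using cycle_adj_Suc_mod[OF assms(1)] by (auto simp: walk_def xs_def simp del: upt_Suc)
  moreover have "hd xs = u" "last xs = v" "length xs \<le> Suc k"
    using assms by (simp_all add: xs_def hd_map last_map del: upt_Suc)
  ultimately show ?thesis
    using assms by (auto simp: graph_power_def dist_le_def cycle_verts_def)
qed

lemma cycle_power_independent_card:
  assumes "k < n" "S \<subseteq> {..<n}"
    and independent: "\<And>s s'. s \<in> S \<Longrightarrow> s' \<in> S \<Longrightarrow> \<not> graph_power (cycle_verts n) (cycle_adj n) k s s'"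
  shows "(k + 1) * card S \<le> n"
proof -
  have shift_eq: "s = s' \<and> d = d'"
    if "s \<in> S" "s' \<in> S" "d \<le> d'" "d' \<le> k" "(s + d) mod n = (s' + d') mod n" for s s' d d'
  proof -
    have "[s + d = (s' + (d' - d)) + d] (mod n)"
      using that by (simp add: cong_def)
    then have "[s = s' + (d' - d)] (mod n)"
      by (simp only: cong_add_rcancel_nat)
    moreover have "s < n" using that assms(2) by auto
    ultimately have "s = (s' + (d' - d)) mod n"
      by (metis cong_def mod_less)
    moreover have "s' < n" using that assms(2) by auto
    ultimately show ?thesis
    proof (cases "d = d'")
      case False
      with that assms(1) have "0 < d' - d" "d' - d < n" by auto
      then have "(s' + (d' - d)) mod n \<noteq> s'"
        using \<open>s' < n\<close> by (metis cong_add_rcancel_0_nat cong_0_iff cong_def mod_less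
            add.commute nat_dvd_not_less)
      moreover have "2 \<le> n" "d' - d \<le> k"
        using \<open>0 < d' - d\<close> \<open>d' - d < n\<close> \<open>d' \<le> k\<close> by auto
      ultimately have "graph_power (cycle_verts n) (cycle_adj n) k s' s"
        using \<open>s = (s' + (d' - d)) mod n\<close> \<open>s' < n\<close> cycle_power_adjI by metis
      with independent that show ?thesis by blast
    qed simp
  qed
  have "inj_on (\<lambda>(s, d). (s + d) mod n) (S \<times> {..k})"
    by (rule inj_onI, clarify) (metis shift_eq nat_le_linear atMost_iff)
  moreover have "(\<lambda>(s, d). (s + d) mod n) ` (S \<times> {..k}) \<subseteq> {..<n}"
    using assms(1) by auto
  ultimately have "card (S \<times> {..k}) \<le> n"
    using card_inj_on_le[of _ _ "{..<n}"] by fastforce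
  moreover have "finite S" using assms(2) finite_subset by blast
  ultimately show ?thesis by (simp add: card_cartesian_product mult.commute)
qed

lemma odd_prime_independent_multiples:
  fixes p :: nat
  assumes "odd_prime V E" "p \<noteq> 1"
  obtains S where "S \<subseteq> V" "\<And>u v. u \<in> S \<Longrightarrow> v \<in> S \<Longrightarrow> \<not> E u v"
    "card S = card {m. odd m \<and> m < 2 * card V \<and> p dvd m}"
proof -
  obtain lab where lab: "bij_betw lab V {m. odd m \<and> m < 2 * card V}"
    and coprime_lab: "\<And>u v. E u v \<Longrightarrow> coprime (lab u) (lab v)"
    using assms(1) unfolding odd_prime_def by blast
  define S where "S = {v \<in> V. p dvd lab v}"
  have "lab ` S = {m \<in> lab ` V. p dvd m}"
    unfolding S_def by blast
  also have "\<dots> = {m. odd m \<and> m < 2 * card V \<and> p dvd m}"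
    using bij_betw_imp_surj_on[OF lab] by auto
  finally have "bij_betw lab S {m. odd m \<and> m < 2 * card V \<and> p dvd m}"
    by (rule bij_betw_subset[OF lab, rotated]) (simp add: S_def)
  then have "card S = card {m. odd m \<and> m < 2 * card V \<and> p dvd m}"
    by (rule bij_betw_same_card)
  moreover have "\<not> E u v" if "u \<in> S" "v \<in> S" for u v
  proof
    assume "E u v"
    then have "coprime (lab u) (lab v)" by (rule coprime_lab)
    with that assms(2) show False
      using coprime_common_divisor_nat unfolding S_def by blast
  qed
  ultimately show thesis
    using that[of S] unfolding S_def by blast
qed

lemma card_odd_multiples_of_3:
  "card {m :: nat. odd m \<and> m < 2 * N \<and> 3 dvd m} = (N + 1) div 3"
proof -
  have bound: "i < (N + 1) div 3 \<longleftrightarrow> 6 * i + 3 < 2 * N" for i :: nat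
    using less_eq_div_iff_mult_less_eq[of 3 "Suc i" "N + 1"] by linarith
  have form: "odd m \<and> 3 dvd m \<longleftrightarrow> m = 6 * (m div 6) + 3" for m :: nat
    by presburger
  have "{m :: nat. odd m \<and> m < 2 * N \<and> 3 dvd m} = (\<lambda>i. 6 * i + 3) ` {..<(N + 1) div 3}"
  proof (intro set_eqI iffI)
    fix m assume "m \<in> {m. odd m \<and> m < 2 * N \<and> 3 dvd m}"
    with form[of m] bound[of "m div 6"] show "m \<in> (\<lambda>i. 6 * i + 3) ` {..<(N + 1) div 3}"
      by (intro image_eqI[of _ _ "m div 6"]) auto
  next
    fix m assume "m \<in> (\<lambda>i. 6 * i + 3) ` {..<(N + 1) div 3}"
    then obtain i where "i < (N + 1) div 3" "m = 6 * i + 3" by blast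
    with form[of m] bound[of i] show "m \<in> {m. odd m \<and> m < 2 * N \<and> 3 dvd m}"
      by simp
  qed
  moreover have "inj (\<lambda>i :: nat. 6 * i + 3)" by (auto intro: injI)
  ultimately show ?thesis by (simp add: card_image inj_on_subset)
qed

lemma coprime_odd_add_power2:
  fixes a :: nat
  assumes "odd a"
  shows "coprime a (a + 2 ^ j)"
proof -
  have "coprime a (2 ^ j)" using assms by simp
  then show ?thesis by (simp add: coprime_iff_gcd_eq_1)
qed

lemma bij_betw_odd_numbers: "bij_betw (\<lambda>i. 2 * i + 1) {..<n} {m :: nat. odd m \<and> m < 2 * n}"
  by (rule bij_betw_byWitness[where f' = "\<lambda>m. m div 2"]) auto

lemma cycle_square_odd_label_coprime:
  fixes d :: nat
  assumes "3 \<le> n" "n mod 3 \<noteq> 2" "u < n" "d \<in> {1, 2}"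
  shows "coprime (2 * u + 1) (2 * ((u + d) mod n) + 1)"
proof (cases "u + d < n")
  case True
  have "2 * ((u + d) mod n) + 1 = (2 * u + 1) + 2 ^ d"
    using True assms(4) by auto
  then show ?thesis using coprime_odd_add_power2[of "2 * u + 1" d] by simp
next
  case False
  with assms have "(u + d) mod n = 0 \<or> (u = n - 1 \<and> (u + d) mod n = 1)"
    by (auto simp: le_mod_geq)
  moreover have "\<not> 3 dvd 2 * (n - 1) + 1"
    using assms(1,2) by presburger
  then have "coprime (2 * (n - 1) + 1) 3"
    by (simp add: prime_imp_coprime coprime_commute)
  ultimately show ?thesis by auto
qed

lemma cycle_square_odd_prime:
  assumes "3 \<le> n" "n mod 3 \<noteq> 2"
  shows "odd_prime (cycle_verts n) (graph_power (cycle_verts n) (cycle_adj n) 2)"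
  unfolding odd_prime_def
proof (intro exI conjI allI impI)
  show "bij_betw (\<lambda>i. 2 * i + 1) (cycle_verts n) {m. odd m \<and> m < 2 * card (cycle_verts n)}"
    using bij_betw_odd_numbers by (simp add: cycle_verts_def atLeast0LessThan)
  fix u v assume "graph_power (cycle_verts n) (cycle_adj n) 2 u v"
  then obtain d where "d \<in> {1..2}" "u < n" "v < n" "v = (u + d) mod n \<or> u = (v + d) mod n"
    using cycle_power_adjD by blast
  moreover from \<open>d \<in> {1..2}\<close> have "d \<in> {1, 2}" by auto
  ultimately show "coprime (2 * u + 1) (2 * v + 1)"
    using cycle_square_odd_label_coprime[OF assms] coprime_commute by metis
qed

theorem theorem5p2:
  fixes n :: nat
  assumes "n \<ge> 3"
  shows "odd_prime (cycle_verts n) (graph_power (cycle_verts n) (cycle_adj n) 2)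
           \<longleftrightarrow> n mod 3 \<noteq> 2"
proof
  assume labelled: "odd_prime (cycle_verts n) (graph_power (cycle_verts n) (cycle_adj n) 2)"
  show "n mod 3 \<noteq> 2"
  proof
    assume "n mod 3 = 2"
    obtain S where "S \<subseteq> {..<n}"
      "\<And>u v. u \<in> S \<Longrightarrow> v \<in> S \<Longrightarrow> \<not> graph_power (cycle_verts n) (cycle_adj n) 2 u v"
      "card S = (n + 1) div 3"
      using odd_prime_independent_multiples[OF labelled, of 3]
      by (auto simp: card_odd_multiples_of_3 cycle_verts_def atLeast0LessThan)
    with assms have "3 * ((n + 1) div 3) \<le> n"
      using cycle_power_independent_card[of 2 n S] by auto
    with \<open>n mod 3 = 2\<close> show False by presburger
  qed
qed (rule cycle_square_odd_prime[OF assms])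

end
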